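(* Let $(d_A,d_B)$ be a bipartite degree sequence that has a realization with matching number $\nu_{\min}$ and a realization with matching number $\nu_{\max}$, and let $\nu$ be an integer with $\nu_{\min}\leq\nu\leq\nu_{\max}$. Then $(d_A,d_B)$ has a realization with matching number $\nu$.
   Context: All graphs are finite, simple and undirected. For a bipartite graph with fixed partite sets $A,B$, its bipartite degree sequence is the pair of nonincreasing sequences of degrees of vertices in $A$ and in $B$; a pair of sequences is a bipartite degree sequence if it arises this way from some bipartite graph, called a realization. The matching number is the maximum size of a matching. *)

theory Defs
  imports Main
begin

text \<open>A bipartite graph with fixed partite sets A = {0..<m} and B = {0..<n} is
represented by its edge set E, a set of pairs (a, b) with a < m and b < n
(an edge joins vertex a of A to vertex b of B). Simplicity is automatic.\<close>

definition bip_graph :: "nat \<Rightarrow> nat \<Rightarrow> (nat \<times> nat) set \<Rightarrow> bool" where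
  "bip_graph m n E \<longleftrightarrow> E \<subseteq> {..<m} \<times> {..<n}"

definition degA :: "(nat \<times> nat) set \<Rightarrow> nat \<Rightarrow> nat" where
  "degA E a = card {b. (a, b) \<in> E}"

definition degB :: "(nat \<times> nat) set \<Rightarrow> nat \<Rightarrow> nat" where
  "degB E b = card {a. (a, b) \<in> E}"

definition realizes :: "nat list \<Rightarrow> nat list \<Rightarrow> (nat \<times> nat) set \<Rightarrow> bool" where
  "realizes dA dB E \<longleftrightarrow> bip_graph (length dA) (length dB) E
     \<and> (\<forall>i < length dA. degA E i = dA ! i)
     \<and> (\<forall>j < length dB. degB E j = dB ! j)"

definition bip_degree_sequence :: "nat list \<Rightarrow> nat list \<Rightarrow> bool" where
  "bip_degree_sequence dA dB \<longleftrightarrow> sorted_wrt (\<ge>) dA \<and> sorted_wrt (\<ge>) dB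
     \<and> (\<exists>E. realizes dA dB E)"

definition is_matching :: "(nat \<times> nat) set \<Rightarrow> (nat \<times> nat) set \<Rightarrow> bool" where
  "is_matching E M \<longleftrightarrow> M \<subseteq> E \<and> inj_on fst M \<and> inj_on snd M"

definition matching_number :: "(nat \<times> nat) set \<Rightarrow> nat" where
  "matching_number E = Max (card ` {M. is_matching E M})"

end

theory Submission
  imports Defs
begin

text \<open>Any two realizations of the same degree sequences are connected by a chain of switches,
  each replacing edges \<open>ab, a'b'\<close> by the non-edges \<open>ab', a'b\<close> (Ryser): make the realizations
  agree row by row, each switch reducing the difference in the current row. A switch lowers the
  matching number by at most one, since a maximum matching either contains both removed edges and
  can be switched along with the graph, or loses at most one edge. Hence along a chain of switches
  from a realization with matching number \<open>\<nu>\<^sub>m\<^sub>i\<^sub>n\<close> to one with \<open>\<nu>\<^sub>m\<^sub>a\<^sub>x\<close> every intermediate value occurs.\<close>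

definition row :: "(nat \<times> nat) set \<Rightarrow> nat \<Rightarrow> nat set" where
  "row E a = {b. (a, b) \<in> E}"

definition col :: "(nat \<times> nat) set \<Rightarrow> nat \<Rightarrow> nat set" where
  "col E b = {a. (a, b) \<in> E}"

lemma degA_eq_card_row: "degA E a = card (row E a)"
  by (simp add: degA_def row_def)

lemma degB_eq_card_col: "degB E b = card (col E b)"
  by (simp add: degB_def col_def)

lemma finite_row: "finite E \<Longrightarrow> finite (row E a)"
  by (rule finite_subset[of _ "snd ` E"]) (force simp: row_def)+

lemma finite_col: "finite E \<Longrightarrow> finite (col E b)"
  by (rule finite_subset[of _ "fst ` E"]) (force simp: col_def)+

lemma realizes_finite: "realizes dA dB E \<Longrightarrow> finite E"
  unfolding realizes_def bip_graph_def by (metis finite_SigmaI finite_lessThan finite_subset)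

lemma realizes_eqI:
  assumes "realizes dA dB E" and "realizes dA dB E'" and "\<forall>a < length dA. row E a = row E' a"
  shows "E = E'"
  using assms unfolding realizes_def bip_graph_def row_def by blast

definition switch :: "(nat \<times> nat) set \<Rightarrow> (nat \<times> nat) set \<Rightarrow> bool" where
  "switch E E' \<longleftrightarrow> (\<exists>a b a' b'. (a, b) \<in> E \<and> (a', b') \<in> E \<and> (a, b') \<notin> E \<and> (a', b) \<notin> E
     \<and> E' = E - {(a, b), (a', b')} \<union> {(a, b'), (a', b)})"

lemma symp_switch: "symp switch"
proof (rule sympI)
  fix E E' assume "switch E E'"
  then obtain a b a' b' where E: "(a, b) \<in> E" "(a', b') \<in> E" "(a, b') \<notin> E" "(a', b) \<notin> E"
    and E': "E' = E - {(a, b), (a', b')} \<union> {(a, b'), (a', b)}"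
    unfolding switch_def by blast
  have "(a, b') \<in> E'" "(a', b) \<in> E'" "(a, b) \<notin> E'" "(a', b') \<notin> E'"
    and "E = E' - {(a, b'), (a', b)} \<union> {(a, b), (a', b')}"
    using E E' by auto
  then show "switch E' E"
    unfolding switch_def by blast
qed

lemma card_insert_Diff_swap: "finite S \<Longrightarrow> x \<in> S \<Longrightarrow> y \<notin> S \<Longrightarrow> card (insert y (S - {x})) = card S"
  by (metis DiffD1 card_Suc_Diff1 card_insert_disjoint finite_Diff)

lemma realizes_switch:
  assumes "realizes dA dB E" and "switch E E'"
  shows "realizes dA dB E'"
proof -
  obtain a b a' b' where E: "(a, b) \<in> E" "(a', b') \<in> E" "(a, b') \<notin> E" "(a', b) \<notin> E"
    and E': "E' = E - {(a, b), (a', b')} \<union> {(a, b'), (a', b)}"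
    using assms(2) unfolding switch_def by blast
  have fin: "finite E" using assms(1) by (rule realizes_finite)
  have "a \<noteq> a'" "b \<noteq> b'" using E by auto
  have "card (row E' x) = card (row E x)" for x
  proof -
    have "row E' a = insert b' (row E a - {b})" "row E' a' = insert b (row E a' - {b'})"
      and "x \<noteq> a \<Longrightarrow> x \<noteq> a' \<Longrightarrow> row E' x = row E x"
      using E E' \<open>a \<noteq> a'\<close> by (auto simp: row_def)
    moreover have "b \<in> row E a" "b' \<notin> row E a" "b' \<in> row E a'" "b \<notin> row E a'"
      using E by (auto simp: row_def)
    ultimately show ?thesis
      using card_insert_Diff_swap[OF finite_row[OF fin]] by metis
  qed
  moreover have "card (col E' y) = card (col E y)" for y
  proof -
    have "col E' b = insert a' (col E b - {a})" "col E' b' = insert a (col E b' - {a'})"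
      and "y \<noteq> b \<Longrightarrow> y \<noteq> b' \<Longrightarrow> col E' y = col E y"
      using E E' \<open>b \<noteq> b'\<close> by (auto simp: col_def)
    moreover have "a \<in> col E b" "a' \<notin> col E b" "a' \<in> col E b'" "a \<notin> col E b'"
      using E by (auto simp: col_def)
    ultimately show ?thesis
      using card_insert_Diff_swap[OF finite_col[OF fin]] by metis
  qed
  moreover have "bip_graph (length dA) (length dB) E'"
    using assms(1) E E' unfolding realizes_def bip_graph_def by auto
  ultimately show ?thesis
    using assms(1) unfolding realizes_def degA_eq_card_row degB_eq_card_col by simp
qed

lemma realizes_rtranclp_switch: "switch\<^sup>*\<^sup>* E E' \<Longrightarrow> realizes dA dB E \<Longrightarrow> realizes dA dB E'"
  by (induction rule: rtranclp_induct) (auto intro: realizes_switch)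

lemma realizes_card_row_eq:
  assumes "realizes dA dB E1" and "realizes dA dB E2"
  shows "card (row E1 a) = card (row E2 a)"
proof (cases "a < length dA")
  case True
  then show ?thesis using assms by (simp add: realizes_def degA_eq_card_row)
next
  case False
  then have "row E1 a = {}" "row E2 a = {}"
    using assms by (auto simp: realizes_def bip_graph_def row_def)
  then show ?thesis by simp
qed

lemma realizes_card_col_eq:
  assumes "realizes dA dB E1" and "realizes dA dB E2"
  shows "card (col E1 b) = card (col E2 b)"
proof (cases "b < length dB")
  case True
  then show ?thesis using assms by (simp add: realizes_def degB_eq_card_col)
next
  case False
  then have "col E1 b = {}" "col E2 b = {}"
    using assms by (auto simp: realizes_def bip_graph_def col_def)
  then show ?thesis by simp
qed

lemma realizes_card_col_Diff_eq:
  assumes "realizes dA dB E1" and "realizes dA dB E2" and "\<forall>x<k. row E1 x = row E2 x"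
  shows "card (col E1 b - {..<k}) = card (col E2 b - {..<k})"
proof -
  have "col E1 b \<inter> {..<k} = col E2 b \<inter> {..<k}"
    using assms(3) by (auto simp: row_def col_def)
  then show ?thesis
    using realizes_card_col_eq[OF assms(1,2)] by (simp add: card_Diff_subset_Int)
qed

text \<open>Let \<open>c\<^sub>i y\<close> count the edges of \<open>E\<^sub>i\<close> from rows \<open>\<ge> k\<close> into column \<open>y\<close>; then \<open>c\<^sub>1 = c\<^sub>2\<close>,
  since rows below \<open>k\<close> agree. Without a suitable row \<open>a' > k\<close> we would get
  \<open>c\<^sub>2 b < c\<^sub>2 b' = c\<^sub>1 b' < c\<^sub>1 b = c\<^sub>2 b\<close>.\<close>

lemma switch_partner_exists:
  assumes r1: "realizes dA dB E1" and r2: "realizes dA dB E2" and agree: "\<forall>x<k. row E1 x = row E2 x"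
    and b: "(k, b) \<in> E1" "(k, b) \<notin> E2" and b': "(k, b') \<in> E2" "(k, b') \<notin> E1"
  shows "(\<exists>a' > k. (a', b) \<in> E2 \<and> (a', b') \<notin> E2) \<or> (\<exists>a' > k. (a', b') \<in> E1 \<and> (a', b) \<notin> E1)"
proof (rule ccontr)
  assume "\<not> ?thesis"
  then have "col E2 b - {..<k} \<subseteq> col E2 b' - {..<k} - {k}" "col E1 b' - {..<k} \<subseteq> col E1 b - {..<k} - {k}"
    using b b' by (auto simp: col_def not_less_iff_gr_or_eq)
  moreover have "k \<in> col E2 b' - {..<k}" "k \<in> col E1 b - {..<k}"
    using b b' by (auto simp: col_def)
  moreover have "finite (col E1 b' - {..<k})" "finite (col E2 b' - {..<k})" "finite (col E1 b - {..<k})"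
    using finite_col realizes_finite r1 r2 by blast+
  ultimately have "card (col E2 b - {..<k}) < card (col E2 b' - {..<k})"
    and "card (col E1 b' - {..<k}) < card (col E1 b - {..<k})"
    by (meson card_Diff1_less card_mono finite_Diff order_le_less_trans)+
  then show False
    using realizes_card_col_Diff_eq[OF r1 r2 agree] by (metis less_asym)
qed

lemma switch_moves_row_towards:
  assumes "finite E" and "finite T" and "k < a'"
    and "(k, b') \<in> E" "(k, b) \<notin> E" "(a', b) \<in> E" "(a', b') \<notin> E" and "b \<in> T" "b' \<notin> T"
  shows "\<exists>E'. switch E E' \<and> (\<forall>x<k. row E' x = row E x)
           \<and> card (T - row E' k) < card (T - row E k) \<and> card (row E' k - T) < card (row E k - T)"
proof -
  let ?E' = "E - {(k, b'), (a', b)} \<union> {(k, b), (a', b')}"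
  have "switch E ?E'"
    unfolding switch_def using assms(4-7) by blast
  moreover have "\<forall>x<k. row ?E' x = row E x"
    using \<open>k < a'\<close> by (auto simp: row_def)
  moreover have "row ?E' k = insert b (row E k - {b'})"
    using \<open>k < a'\<close> by (auto simp: row_def)
  then have "T - row ?E' k = (T - row E k) - {b}" "row ?E' k - T = (row E k - T) - {b'}"
    using assms(8,9) by auto
  moreover have "b \<in> T - row E k" "b' \<in> row E k - T"
    using assms(4,5,8,9) by (auto simp: row_def)
  ultimately show ?thesis
    using assms(1,2) finite_row by (metis card_Diff1_less finite_Diff)
qed

lemma rtranclp_switch_agree_on_row:
  assumes "realizes dA dB E1" and "realizes dA dB E2" and "\<forall>x<k. row E1 x = row E2 x"
  shows "\<exists>F1 F2. switch\<^sup>*\<^sup>* E1 F1 \<and> switch\<^sup>*\<^sup>* E2 F2 \<and> (\<forall>x\<le>k. row F1 x = row F2 x)"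
  using assms
proof (induction "card (row E1 k - row E2 k)" arbitrary: E1 E2 rule: less_induct)
  case less
  note r1 = \<open>realizes dA dB E1\<close> and r2 = \<open>realizes dA dB E2\<close>
    and agree = \<open>\<forall>x<k. row E1 x = row E2 x\<close>
  have fin: "finite E1" "finite E2" "finite (row E1 k)" "finite (row E2 k)"
    using realizes_finite[OF r1] realizes_finite[OF r2] by (simp_all add: finite_row)
  show ?case
  proof (cases "row E1 k = row E2 k")
    case True
    with agree have "\<forall>x\<le>k. row E1 x = row E2 x" by (auto simp: le_less)
    then show ?thesis by blast
  next
    case False
    have "card (row E1 k) = card (row E2 k)" using r1 r2 by (rule realizes_card_row_eq)
    then have "\<not> row E1 k \<subseteq> row E2 k" "\<not> row E2 k \<subseteq> row E1 k"
      using False card_subset_eq[OF fin(4)] card_subset_eq[OF fin(3)] by auto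
    then obtain b b' where b: "b \<in> row E1 k" "b \<notin> row E2 k" and b': "b' \<in> row E2 k" "b' \<notin> row E1 k"
      by blast
    then have "(k, b) \<in> E1" "(k, b) \<notin> E2" "(k, b') \<in> E2" "(k, b') \<notin> E1"
      by (auto simp: row_def)
    from switch_partner_exists[OF r1 r2 agree this]
    show ?thesis
    proof (elim disjE exE conjE)
      fix a' assume "k < a'" "(a', b) \<in> E2" "(a', b') \<notin> E2"
      then obtain E2' where "switch E2 E2'" and rows: "\<forall>x<k. row E2' x = row E2 x"
        and closer: "card (row E1 k - row E2' k) < card (row E1 k - row E2 k)"
        using switch_moves_row_towards[of E2 "row E1 k" k a' b' b] fin b b' by (auto simp: row_def)
      have "realizes dA dB E2'" using r2 \<open>switch E2 E2'\<close> by (rule realizes_switch)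
      moreover have "\<forall>x<k. row E1 x = row E2' x" using agree rows by simp
      ultimately obtain F1 F2 where "switch\<^sup>*\<^sup>* E1 F1" "switch\<^sup>*\<^sup>* E2' F2" "\<forall>x\<le>k. row F1 x = row F2 x"
        using less.hyps[OF closer r1] by blast
      then show ?thesis
        using \<open>switch E2 E2'\<close> by (meson converse_rtranclp_into_rtranclp)
    next
      fix a' assume "k < a'" "(a', b') \<in> E1" "(a', b) \<notin> E1"
      then obtain E1' where "switch E1 E1'" and rows: "\<forall>x<k. row E1' x = row E1 x"
        and closer: "card (row E1' k - row E2 k) < card (row E1 k - row E2 k)"
        using switch_moves_row_towards[of E1 "row E2 k" k a' b b'] fin b b' by (auto simp: row_def)
      have "realizes dA dB E1'" using r1 \<open>switch E1 E1'\<close> by (rule realizes_switch)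
      moreover have "\<forall>x<k. row E1' x = row E2 x" using agree rows by simp
      ultimately obtain F1 F2 where "switch\<^sup>*\<^sup>* E1' F1" "switch\<^sup>*\<^sup>* E2 F2" "\<forall>x\<le>k. row F1 x = row F2 x"
        using less.hyps[OF closer _ r2] by blast
      then show ?thesis
        using \<open>switch E1 E1'\<close> by (meson converse_rtranclp_into_rtranclp)
    qed
  qed
qed

lemma rtranclp_switch_if_rows_agree:
  assumes "k \<le> length dA" and "realizes dA dB E1" and "realizes dA dB E2"
    and "\<forall>x<k. row E1 x = row E2 x"
  shows "switch\<^sup>*\<^sup>* E1 E2"
  using assms
proof (induction k arbitrary: E1 E2 rule: inc_induct)
  case base
  then have "E1 = E2" by (rule realizes_eqI)
  then show ?case by simp
next
  case (step k)
  obtain F1 F2 where F: "switch\<^sup>*\<^sup>* E1 F1" "switch\<^sup>*\<^sup>* E2 F2" "\<forall>x\<le>k. row F1 x = row F2 x"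
    using rtranclp_switch_agree_on_row[OF step.prems] by blast
  have "realizes dA dB F1" "realizes dA dB F2"
    using realizes_rtranclp_switch F(1,2) step.prems(1,2) by blast+
  moreover have "\<forall>x<Suc k. row F1 x = row F2 x"
    using F(3) by (simp add: less_Suc_eq_le)
  ultimately have "switch\<^sup>*\<^sup>* F1 F2"
    by (rule step.IH)
  moreover have "switch\<^sup>*\<^sup>* F2 E2"
    using F(2) by (rule sympD[OF symp_rtranclp[OF symp_switch]])
  ultimately show ?case
    using F(1) by (meson rtranclp_trans)
qed

lemma realizations_switch_connected:
  assumes "realizes dA dB E1" and "realizes dA dB E2"
  shows "switch\<^sup>*\<^sup>* E1 E2"
  using rtranclp_switch_if_rows_agree[of 0] assms by simp

lemma finite_matchings: "finite E \<Longrightarrow> finite {M. is_matching E M}"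
  by (rule finite_subset[of _ "Pow E"]) (auto simp: is_matching_def)

lemma card_le_matching_number: "finite E \<Longrightarrow> is_matching E M \<Longrightarrow> card M \<le> matching_number E"
  unfolding matching_number_def by (rule Max_ge) (auto simp: finite_matchings)

lemma matching_number_attained: "finite E \<Longrightarrow> \<exists>M. is_matching E M \<and> card M = matching_number E"
proof -
  assume "finite E"
  moreover have "is_matching E {}" by (simp add: is_matching_def)
  ultimately have "matching_number E \<in> card ` {M. is_matching E M}"
    unfolding matching_number_def by (intro Max_in) (auto simp: finite_matchings)
  then show ?thesis by auto
qed

lemma card_Diff_Un_two:
  assumes "finite S" "p \<in> S" "q \<in> S" "p \<noteq> q" "p' \<notin> S" "q' \<notin> S" "p' \<noteq> q'"
  shows "card (S - {p, q} \<union> {p', q'}) = card S"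
proof -
  have "card (S - {p, q} \<union> {p', q'}) = card (S - {p, q}) + 2"
    using assms by (subst card_Un_disjoint) auto
  also have "card (S - {p, q}) = card S - 2"
    using assms by (subst card_Diff_subset) auto
  also have "card {p, q} \<le> card S"
    using assms by (intro card_mono) auto
  then have "card S - 2 + 2 = card S"
    using assms by simp
  finally show ?thesis .
qed

lemma is_matching_switch:
  assumes M: "is_matching E M" and in_M: "(a, b) \<in> M" "(a', b') \<in> M" and "a \<noteq> a'" "b \<noteq> b'"
  shows "is_matching (E - {(a, b), (a', b')} \<union> {(a, b'), (a', b)})
                     (M - {(a, b), (a', b')} \<union> {(a, b'), (a', b)})"
proof -
  let ?R = "M - {(a, b), (a', b')}"
  have inj: "inj_on fst M" "inj_on snd M" and "M \<subseteq> E"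
    using M by (auto simp: is_matching_def)
  have rest: "fst p \<notin> {a, a'} \<and> snd p \<notin> {b, b'}" if p: "p \<in> ?R" for p
  proof -
    have "p \<in> M" "p \<noteq> (a, b)" "p \<noteq> (a', b')" using p by auto
    then show ?thesis
      using in_M inj_onD[OF inj(1), of p "(a, b)"] inj_onD[OF inj(1), of p "(a', b')"]
        inj_onD[OF inj(2), of p "(a, b)"] inj_onD[OF inj(2), of p "(a', b')"] by auto
  qed
  have "inj_on fst (?R \<union> {(a, b'), (a', b)})"
    unfolding inj_on_Un
  proof (intro conjI)
    show "inj_on fst ?R" using inj(1) by (rule inj_on_subset) auto
    show "inj_on fst {(a, b'), (a', b)}" using \<open>a \<noteq> a'\<close> by simp
    show "fst ` (?R - {(a, b'), (a', b)}) \<inter> fst ` ({(a, b'), (a', b)} - ?R) = {}"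
      using rest by fastforce
  qed
  moreover have "inj_on snd (?R \<union> {(a, b'), (a', b)})"
    unfolding inj_on_Un
  proof (intro conjI)
    show "inj_on snd ?R" using inj(2) by (rule inj_on_subset) auto
    show "inj_on snd {(a, b'), (a', b)}" using \<open>b \<noteq> b'\<close> by simp
    show "snd ` (?R - {(a, b'), (a', b)}) \<inter> snd ` ({(a, b'), (a', b)} - ?R) = {}"
      using rest by fastforce
  qed
  ultimately show ?thesis
    using \<open>M \<subseteq> E\<close> by (auto simp: is_matching_def)
qed

lemma matching_number_switch_le:
  assumes "switch E E'" and "finite E"
  shows "matching_number E \<le> matching_number E' + 1"
proof -
  obtain a b a' b' where E: "(a, b) \<in> E" "(a', b') \<in> E" "(a, b') \<notin> E" "(a', b) \<notin> E"
    and E': "E' = E - {(a, b), (a', b')} \<union> {(a, b'), (a', b)}"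
    using assms(1) unfolding switch_def by blast
  have "a \<noteq> a'" "b \<noteq> b'" using E by auto
  obtain M where M: "is_matching E M" "card M = matching_number E"
    using matching_number_attained[OF assms(2)] by blast
  have "M \<subseteq> E" using M by (simp add: is_matching_def)
  then have "finite M" using assms(2) by (rule finite_subset)
  have "finite E'" using assms(2) E' by simp
  show ?thesis
  proof (cases "(a, b) \<in> M \<and> (a', b') \<in> M")
    case True
    let ?M' = "M - {(a, b), (a', b')} \<union> {(a, b'), (a', b)}"
    have "is_matching E' ?M'"
      using is_matching_switch[OF M(1)] True \<open>a \<noteq> a'\<close> \<open>b \<noteq> b'\<close> E' by simp
    moreover have "card ?M' = card M"
      using True E \<open>M \<subseteq> E\<close> \<open>finite M\<close> \<open>a \<noteq> a'\<close> by (intro card_Diff_Un_two) auto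
    ultimately show ?thesis
      using card_le_matching_number[OF \<open>finite E'\<close>] M(2) by (metis le_add1 order_trans)
  next
    case False
    let ?M' = "M - {(a, b), (a', b')}"
    have "?M' \<subseteq> E'" using \<open>M \<subseteq> E\<close> E' by auto
    moreover have "inj_on fst ?M'" "inj_on snd ?M'"
      using M(1) by (meson Diff_subset inj_on_subset is_matching_def)+
    ultimately have "is_matching E' ?M'" by (simp add: is_matching_def)
    define p where "p = (if (a, b) \<in> M then (a, b) else (a', b'))"
    have "M \<subseteq> insert p ?M'" using False unfolding p_def by auto
    then have "card M \<le> card (insert p ?M')" using \<open>finite M\<close> by (intro card_mono) auto
    also have "\<dots> \<le> card ?M' + 1" using \<open>finite M\<close> by (simp add: card_insert_if)
    finally show ?thesis
      using card_le_matching_number[OF \<open>finite E'\<close> \<open>is_matching E' ?M'\<close>] M(2) by linarith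
  qed
qed

lemma realizes_switch_matching_number_le:
  assumes "realizes dA dB E" and "switch E E'"
  shows "matching_number E' \<le> matching_number E + 1"
proof -
  have "finite E'" using realizes_finite[OF realizes_switch[OF assms]] .
  with sympD[OF symp_switch assms(2)] show ?thesis by (rule matching_number_switch_le)
qed

lemma rtranclp_nat_intermediate_value:
  fixes f :: "'a \<Rightarrow> nat"
  assumes "R\<^sup>*\<^sup>* x y" and "P x"
    and P_step: "\<And>u w. P u \<Longrightarrow> R u w \<Longrightarrow> P w"
    and f_step: "\<And>u w. P u \<Longrightarrow> R u w \<Longrightarrow> f w \<le> f u + 1"
    and "f x \<le> v" and "v \<le> f y"
  shows "\<exists>z. P z \<and> f z = v"
  using assms(1,6)
proof (induction rule: rtranclp_induct)
  case base
  with \<open>P x\<close> \<open>f x \<le> v\<close> show ?case by auto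
next
  case (step y z)
  have "P y"
    using \<open>R\<^sup>*\<^sup>* x y\<close> \<open>P x\<close> by (induction rule: rtranclp_induct) (blast intro: P_step)+
  show ?case
  proof (cases "v \<le> f y")
    case True
    with step.IH show ?thesis .
  next
    case False
    with f_step[OF \<open>P y\<close> \<open>R y z\<close>] \<open>v \<le> f z\<close> have "f z = v" by simp
    with P_step[OF \<open>P y\<close> \<open>R y z\<close>] show ?thesis by blast
  qed
qed

theorem theorem4:
  fixes dA dB :: "nat list" and E1 E2 :: "(nat \<times> nat) set" and \<nu>min \<nu>max \<nu> :: nat
  assumes "bip_degree_sequence dA dB"
    and "realizes dA dB E1" and "matching_number E1 = \<nu>min"
    and "realizes dA dB E2" and "matching_number E2 = \<nu>max"
    and "\<nu>min \<le> \<nu>" and "\<nu> \<le> \<nu>max"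
  shows "\<exists>E. realizes dA dB E \<and> matching_number E = \<nu>"
proof -
  have "switch\<^sup>*\<^sup>* E1 E2"
    using assms(2,4) by (rule realizations_switch_connected)
  then show ?thesis
  proof (rule rtranclp_nat_intermediate_value[where P = "realizes dA dB" and f = matching_number])
    show "matching_number E1 \<le> \<nu>" "\<nu> \<le> matching_number E2"
      using assms(3,5-7) by simp_all
  qed (use assms(2) realizes_switch realizes_switch_matching_number_le in simp_all)
qed

end
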